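(* Let $G$ be a finite simple graph, $S\subseteq V(G)$, and $t\ge 3$. Suppose $G\setminus S$ is isomorphic to the graph $G_{n,t}$ for some $n\ne 3,5$ with $t>\lceil n/2\rceil$. Then $\mathrm{CF}_t(\mathrm{Cl}(G,S,t))$ is not shellable.
   Context: $G_{n,t}$: start with the complete graph $K_n$ on $y_1,\dots,y_n$; for each $1\le i\le n$ add $t-2$ new vertices $x_{i,1},\dots,x_{i,t-2}$ and make $\{y_i,y_{i+1},x_{i,1},\dots,x_{i,t-2}\}$ a clique (indices of $y$ modulo $n$); there are no other edges. $\mathrm{Cl}(G,S,t)$ is the graph obtained from $G$ by attaching, simultaneously for each $v\in S$, a clique $K_v$ with $v\in V(K_v)$ and $|V(K_v)|\ge t$, whose other vertices are new, with $K_u,K_v$ vertex-disjoint for $u\ne v$. $G\setminus S$ is the induced subgraph on $V(G)\setminus S$. $\mathrm{CF}_t(\cdot)$ is the simplicial complex on the vertex set whose faces are the vertex subsets inducing no $t$-clique. A simplicial complex is shellable if its facets admit an order $F_1,\dots,F_s$ such that for all $i<j$ there exist $v\in F_j\setminus F_i$ and $\ell<j$ with $F_j\setminus F_\ell=\{v\}$. *)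

theory Defs
  imports Main
begin

definition simple_graph :: "'a set \<Rightarrow> 'a set set \<Rightarrow> bool" where
  "simple_graph V E \<longleftrightarrow> finite V \<and> E \<subseteq> {{u, v} | u v. u \<in> V \<and> v \<in> V \<and> u \<noteq> v}"

definition two_sets :: "'a set \<Rightarrow> 'a set set" where
  "two_sets A = {e. e \<subseteq> A \<and> card e = 2}"

definition del_edges :: "'a set \<Rightarrow> 'a set set \<Rightarrow> 'a set set" where
  "del_edges S E = {e \<in> E. e \<inter> S = {}}"

definition graph_iso :: "'a set \<Rightarrow> 'a set set \<Rightarrow> 'b set \<Rightarrow> 'b set set \<Rightarrow> bool" where
  "graph_iso V1 E1 V2 E2 \<longleftrightarrow> (\<exists>f. bij_betw f V1 V2 \<and>
     (\<forall>u\<in>V1. \<forall>v\<in>V1. {u, v} \<in> E1 \<longleftrightarrow> {f u, f v} \<in> E2))"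

text \<open>The graph G_{n,t}: y_i = (i,0) for i<n, x_{i,j} = (i,j) for 1 \<le> j \<le> t-2.\<close>
definition Gnt_block :: "nat \<Rightarrow> nat \<Rightarrow> nat \<Rightarrow> (nat \<times> nat) set" where
  "Gnt_block n t i = {(i, 0), ((i + 1) mod n, 0)} \<union> {(i, j) | j. 1 \<le> j \<and> j \<le> t - 2}"

definition Gnt_V :: "nat \<Rightarrow> nat \<Rightarrow> (nat \<times> nat) set" where
  "Gnt_V n t = {(i, 0) | i. i < n} \<union> {(i, j) | i j. i < n \<and> 1 \<le> j \<and> j \<le> t - 2}"

definition Gnt_E :: "nat \<Rightarrow> nat \<Rightarrow> (nat \<times> nat) set set" where
  "Gnt_E n t = {{(i, 0), (k, 0)} | i k. i < n \<and> k < n \<and> i \<noteq> k}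
              \<union> (\<Union>i<n. two_sets (Gnt_block n t i))"

definition is_Cl :: "'a set \<Rightarrow> 'a set set \<Rightarrow> 'a set \<Rightarrow> nat \<Rightarrow> 'a set \<Rightarrow> 'a set set \<Rightarrow> bool" where
  "is_Cl V E S t V' E' \<longleftrightarrow> (\<exists>K :: 'a \<Rightarrow> 'a set.
     (\<forall>v\<in>S. v \<in> K v \<and> finite (K v) \<and> card (K v) \<ge> t \<and> K v \<inter> V = {v}) \<and>
     (\<forall>u\<in>S. \<forall>v\<in>S. u \<noteq> v \<longrightarrow> K u \<inter> K v = {}) \<and>
     V' = V \<union> (\<Union>v\<in>S. K v) \<and>
     E' = E \<union> (\<Union>v\<in>S. two_sets (K v)))"

definition is_clique :: "'a set set \<Rightarrow> 'a set \<Rightarrow> bool" where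
  "is_clique E A \<longleftrightarrow> (\<forall>u\<in>A. \<forall>v\<in>A. u \<noteq> v \<longrightarrow> {u, v} \<in> E)"

definition CF :: "nat \<Rightarrow> 'a set \<Rightarrow> 'a set set \<Rightarrow> 'a set set" where
  "CF t V E = {A. A \<subseteq> V \<and> \<not> (\<exists>B\<subseteq>A. card B = t \<and> is_clique E B)}"

definition facets :: "'a set set \<Rightarrow> 'a set set" where
  "facets D = {F \<in> D. \<not> (\<exists>G\<in>D. F \<subset> G)}"

definition shellable :: "'a set set \<Rightarrow> bool" where
  "shellable D \<longleftrightarrow> (\<exists>Fs. distinct Fs \<and> set Fs = facets D \<and>
     (\<forall>i j. i < j \<and> j < length Fs \<longrightarrow>
        (\<exists>v \<in> Fs ! j - Fs ! i. \<exists>l < j. Fs ! j - Fs ! l = {v})))"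

end

theory Submission
  imports Defs
begin

(*
  Fix in every attached clique K_v a set P_v of t - 1 vertices other than v, and let sigma be the
  union of the P_v with all vertices x_{i,j}. For an independent set J of the n-cycle on the y_i
  with |J| < t, sigma together with the y_j (j in J) is a face of CF_t, and a facet if J is a
  maximal independent set; in particular this holds for the arcs {a, a+2, ..., a+2(floor(n/2)-1)}
  (indices mod n). Suppose such a facet F comes after some facet containing sigma in a shelling.
  The shelling condition gives an earlier facet F' with F - F' = {y_w}; F' contains sigma, the
  remaining y_j of F and some y_u with u outside the arc, and u has no neighbour in the arc other
  than w. For even n every vertex outside an arc has two neighbours in it, so the later of the two
  parity classes cannot occur. For n = 2m+1 the only such exchanges shift the arc by one step; the
  resulting constraints on the shelling positions of the n arcs contradict each other when m >= 3.
*)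

section \<open>Maximal independent sets of the cycle\<close>

lemma mod_neq_of_lt:
  fixes a b n :: nat
  assumes "a < b" "b < a + n"
  shows "a mod n \<noteq> b mod n"
proof
  assume "a mod n = b mod n"
  then have "n dvd b - a"
    using mod_eq_dvd_iff_nat[of a b n] assms(1) by simp
  with assms show False
    by (auto dest: dvd_imp_le)
qed

lemma mod_offset_unique:
  fixes a c c' n :: nat
  assumes "c < n" "c' < n" "(a + c) mod n = (a + c') mod n"
  shows "c = c'"
  using mod_neq_of_lt[of "a + c" "a + c'" n] mod_neq_of_lt[of "a + c'" "a + c" n] assms
  by (cases c c' rule: linorder_cases) auto

lemma mod_offset_exists:
  fixes a u n :: nat
  assumes "u < n"
  obtains c where "c < n" "u = (a + c) mod n"
proof
  let ?c = "(u + n - a mod n) mod n"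
  show "?c < n"
    using assms by simp
  have "a mod n < n"
    using assms by simp
  then have "a + (u + n - a mod n) = u + n + a div n * n"
    using div_mult_mod_eq[of a n] by linarith
  then have "(a + ?c) mod n = (u + n + a div n * n) mod n"
    by (metis mod_add_right_eq)
  then show "u = (a + ?c) mod n"
    using assms by simp
qed

lemma mod_double_cancel:
  fixes x y n :: nat
  assumes "odd n" "(2 * x) mod n = (2 * y) mod n"
  shows "x mod n = y mod n"
proof -
  have "int n dvd 2 * (int x - int y)"
    using assms(2) by (metis mod_eq_dvd_iff of_nat_mult of_nat_numeral right_diff_distrib zmod_int)
  moreover have "coprime (int n) 2"
    using assms(1) by simp
  ultimately have "int n dvd int x - int y"
    using coprime_dvd_mult_right_iff by blast
  then show ?thesis
    by (metis mod_eq_dvd_iff nat_int zmod_int)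
qed

definition cyc_adj :: "nat \<Rightarrow> nat \<Rightarrow> nat \<Rightarrow> bool" where
  "cyc_adj n i j \<longleftrightarrow> j = Suc i mod n \<or> i = Suc j mod n"

definition cyc_indep :: "nat \<Rightarrow> nat set \<Rightarrow> bool" where
  "cyc_indep n J \<longleftrightarrow> J \<subseteq> {..<n} \<and> (\<forall>i\<in>J. \<forall>j\<in>J. \<not> cyc_adj n i j)"

definition cyc_dom :: "nat \<Rightarrow> nat set \<Rightarrow> bool" where
  "cyc_dom n J \<longleftrightarrow> (\<forall>u<n. u \<notin> J \<longrightarrow> (\<exists>j\<in>J. cyc_adj n u j))"

definition arc :: "nat \<Rightarrow> nat \<Rightarrow> nat set" where
  "arc n a = (\<lambda>b. (a + 2 * b) mod n) ` {..<n div 2}"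

lemma arc_mem_iff:
  assumes "c < n"
  shows "(a + c) mod n \<in> arc n a \<longleftrightarrow> even c \<and> Suc c < n"
proof
  assume "(a + c) mod n \<in> arc n a"
  then obtain b where b: "b < n div 2" "(a + c) mod n = (a + 2 * b) mod n"
    unfolding arc_def lessThan_iff by blast
  have "2 * b < n"
    using b(1) by presburger
  then have "c = 2 * b"
    by (rule mod_offset_unique[OF assms _ b(2)])
  with b(1) show "even c \<and> Suc c < n"
    by auto
next
  assume "even c \<and> Suc c < n"
  then obtain b where "c = 2 * b" "b < n div 2"
    by (auto elim!: evenE)
  then show "(a + c) mod n \<in> arc n a"
    unfolding arc_def by auto
qed

lemma arc_cong: "a mod n = a' mod n \<Longrightarrow> arc n a = arc n a'"
  unfolding arc_def by (metis mod_add_left_eq)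

lemma arc_memI: "b < n div 2 \<Longrightarrow> (a + 2 * b) mod n \<in> arc n a"
  unfolding arc_def by blast

lemma arc_subset: "0 < n \<Longrightarrow> arc n a \<subseteq> {..<n}"
  unfolding arc_def by auto

lemma card_arc: "card (arc n a) \<le> n div 2"
  unfolding arc_def using card_image_le[of "{..<n div 2}"] by simp

lemma arc_start: "2 \<le> n \<Longrightarrow> a mod n \<in> arc n a"
  using arc_mem_iff[of 0 n a] by simp

lemma cyc_indep_arc:
  assumes "0 < n"
  shows "cyc_indep n (arc n a)"
proof -
  have "Suc i mod n \<notin> arc n a" if i: "i \<in> arc n a" for i
  proof -
    obtain b where b: "b < n div 2" "i = (a + 2 * b) mod n"
      using i unfolding arc_def lessThan_iff by blast
    then have "Suc i mod n = (a + Suc (2 * b)) mod n"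
      by (simp add: mod_Suc_eq)
    moreover have "Suc (2 * b) < n"
      using b(1) by linarith
    ultimately show ?thesis
      using arc_mem_iff[of "Suc (2 * b)" n a] by simp
  qed
  then show ?thesis
    unfolding cyc_indep_def cyc_adj_def using arc_subset[OF assms] by blast
qed

lemma cyc_dom_arc:
  assumes "2 \<le> n"
  shows "cyc_dom n (arc n a)"
  unfolding cyc_dom_def
proof (intro allI impI)
  fix u assume u: "u < n" "u \<notin> arc n a"
  obtain c where c: "c < n" "u = (a + c) mod n"
    using mod_offset_exists u(1) by blast
  show "\<exists>j\<in>arc n a. cyc_adj n u j"
  proof (cases "even c")
    case True
    then have "Suc c = n"
      using u(2) c arc_mem_iff by simp
    have "Suc u mod n = (a + Suc c) mod n"
      using c(2) by (simp add: mod_Suc_eq)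
    also have "\<dots> = a mod n"
      using \<open>Suc c = n\<close> by simp
    finally show ?thesis
      using arc_start[OF assms] unfolding cyc_adj_def
      by (intro bexI[of _ "a mod n"]) simp_all
  next
    case False
    then obtain c' where c': "c = Suc c'"
      by (cases c) auto
    then have "(a + c') mod n \<in> arc n a"
      using arc_mem_iff[of c' n a] c(1) False by simp
    moreover have "Suc ((a + c') mod n) mod n = u"
      unfolding c(2) c' by (simp add: mod_Suc_eq)
    ultimately show ?thesis
      unfolding cyc_adj_def by (intro bexI[of _ "(a + c') mod n"]) simp_all
  qed
qed

lemma arc_outside:
  assumes n: "3 \<le> n" and u: "u < n" "u \<notin> arc n a"
  shows "(\<exists>j j'. j \<in> arc n a \<and> j' \<in> arc n a \<and> j \<noteq> j' \<and> cyc_adj n u j \<and> cyc_adj n u j') \<or>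
         odd n \<and> (u = (a + (n - 1)) mod n \<or> u = (a + (n - 2)) mod n)"
proof -
  obtain c where c: "c < n" "u = (a + c) mod n"
    using mod_offset_exists u(1) by blast
  have succ: "Suc u mod n = (a + Suc c) mod n"
    using c(2) by (simp add: mod_Suc_eq)
  show ?thesis
  proof (cases "even c")
    case True
    then have "Suc c = n"
      using u(2) c arc_mem_iff by simp
    with True c(2) show ?thesis
      by auto
  next
    case False
    then obtain c' where c': "c = Suc c'"
      by (cases c) auto
    have "(a + c') mod n \<in> arc n a"
      using arc_mem_iff[of c' n a] c(1) c' False by simp
    moreover have "cyc_adj n u ((a + c') mod n)"
      unfolding cyc_adj_def c(2) c' by (simp add: mod_Suc_eq)
    moreover have "(\<exists>d. d < n \<and> even d \<and> Suc d < n \<and> d \<noteq> c' \<and> Suc u mod n = (a + d) mod n) \<or>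
        Suc (Suc c) = n"
    proof -
      consider "Suc c = n" | "Suc (Suc c) = n" | "Suc (Suc c) < n"
        using c(1) by linarith
      then show ?thesis
      proof cases
        case 1
        then show ?thesis
          using succ n c' by (intro disjI1 exI[of _ 0]) simp
      next
        case 3
        then show ?thesis
          using succ c' False by (intro disjI1 exI[of _ "Suc c"]) simp
      qed simp
    qed
    ultimately show ?thesis
    proof (elim disjE exE conjE)
      fix d assume "d < n" "even d" "Suc d < n" "d \<noteq> c'" and d: "Suc u mod n = (a + d) mod n"
      then have "(a + d) mod n \<in> arc n a" "(a + d) mod n \<noteq> (a + c') mod n"
        using arc_mem_iff[of d n a] mod_offset_unique[of d n c' a] c(1) c' by auto
      moreover have "cyc_adj n u ((a + d) mod n)"
        unfolding cyc_adj_def d by simp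
      ultimately show ?thesis
        using \<open>(a + c') mod n \<in> arc n a\<close> \<open>cyc_adj n u ((a + c') mod n)\<close> by blast
    next
      assume "Suc (Suc c) = n"
      with False c(2) show ?thesis
        by auto
    qed
  qed
qed

lemma arc_exchange:
  assumes n: "3 \<le> n" and u: "u < n" "u \<notin> arc n a"
    and only_w: "\<And>j. j \<in> arc n a \<Longrightarrow> cyc_adj n u j \<Longrightarrow> j = w"
  shows "odd n \<and> (w = a mod n \<and> u = (a + (n - 1)) mod n \<or>
                   w = (a + (n - 3)) mod n \<and> u = (a + (n - 2)) mod n)"
  using arc_outside[OF n u]
proof (elim disjE conjE exE)
  fix j j' assume "j \<in> arc n a" "j' \<in> arc n a" "j \<noteq> j'" "cyc_adj n u j" "cyc_adj n u j'"
  then show ?thesis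
    using only_w by blast
next
  assume odd: "odd n" and u_eq: "u = (a + (n - 1)) mod n"
  have "Suc u mod n = (a + n) mod n"
    unfolding u_eq using n by (simp add: mod_Suc_eq)
  then have "cyc_adj n u (a mod n)"
    unfolding cyc_adj_def by simp
  then show ?thesis
    using only_w arc_start[of n a] odd u_eq n by simp
next
  assume odd: "odd n" and u_eq: "u = (a + (n - 2)) mod n"
  have last: "(a + (n - 3)) mod n \<in> arc n a"
    using arc_mem_iff[of "n - 3" n a] odd n by simp
  have "Suc (a + (n - 3)) = a + (n - 2)"
    using n by simp
  then have "cyc_adj n u ((a + (n - 3)) mod n)"
    unfolding cyc_adj_def u_eq by (metis mod_Suc_eq)
  with last show ?thesis
    using only_w odd u_eq by simp
qed

lemma arc_inj:
  assumes "odd n" "arc n a = arc n a'"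
  shows "a mod n = a' mod n"
proof (rule ccontr)
  assume ne: "a mod n \<noteq> a' mod n"
  have "n \<noteq> 1"
    using ne by auto
  then have n: "2 \<le> n"
    using assms(1) by presburger
  obtain c where c: "c < n" "a' mod n = (a + c) mod n"
    using mod_offset_exists[of "a' mod n" n a] n by auto
  have "a' mod n \<in> arc n a"
    using assms(2) arc_start[OF n] by simp
  then have c_arc: "even c" "0 < c"
    using arc_mem_iff[of c n a] c ne by (auto intro: Nat.gr0I)
  have "(a' + (n - c)) mod n = (a + c + (n - c)) mod n"
    using c(2) by (metis mod_add_left_eq)
  also have "\<dots> = a mod n"
    using c(1) by simp
  finally have "(a' + (n - c)) mod n \<in> arc n a'"
    using assms(2) arc_start[OF n, of a] by simp
  then show False
    using arc_mem_iff[of "n - c" n a'] c_arc c(1) assms(1) by simp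
qed

lemma arc_even_distinct:
  assumes "even n" "2 \<le> n"
  shows "arc n 0 \<noteq> arc n 1"
proof -
  have "0 \<in> arc n 0"
    using arc_start[OF assms(2), of 0] by simp
  moreover have "(1 + (n - 1)) mod n \<notin> arc n 1"
    using arc_mem_iff[of "n - 1" n 1] assms by simp
  ultimately show ?thesis
    using assms(2) by auto
qed

lemma arc_shift_succ:
  assumes "n = 2 * m + 1"
  shows "arc n (a + 2) \<subseteq> insert ((a + (n - 1)) mod n) (arc n a - {a mod n})"
proof
  fix x assume "x \<in> arc n (a + 2)"
  then obtain b where b: "b < m" "x = (a + 2 + 2 * b) mod n"
    unfolding arc_def lessThan_iff using assms by auto
  show "x \<in> insert ((a + (n - 1)) mod n) (arc n a - {a mod n})"
  proof (cases "Suc b = m")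
    case True
    then have "a + 2 + 2 * b = a + (n - 1)"
      using assms by simp
    then show ?thesis
      using b(2) by (metis insertI1)
  next
    case False
    then have "Suc b < m"
      using b(1) by simp
    then have "x = (a + 2 * Suc b) mod n" "2 * Suc b < n"
      using b assms by auto
    moreover have "x \<in> arc n a"
      using arc_mem_iff[of "2 * Suc b" n a] calculation assms \<open>Suc b < m\<close> by simp
    moreover have "x \<noteq> (a + 0) mod n"
      using mod_offset_unique[of "2 * Suc b" n 0 a] calculation by auto
    ultimately show ?thesis
      by simp
  qed
qed

lemma arc_shift_pred:
  assumes "n = 2 * m + 1"
  shows "arc n (a + n - 2) \<subseteq> insert ((a + (n - 2)) mod n) (arc n a - {(a + (n - 3)) mod n})"
proof
  fix x assume "x \<in> arc n (a + n - 2)"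
  then obtain b where b: "b < m" "x = (a + n - 2 + 2 * b) mod n"
    unfolding arc_def lessThan_iff using assms by auto
  show "x \<in> insert ((a + (n - 2)) mod n) (arc n a - {(a + (n - 3)) mod n})"
  proof (cases b)
    case 0
    then show ?thesis
      using b assms by simp
  next
    case (Suc b')
    then have "a + n - 2 + 2 * b = (a + 2 * b') + n"
      using assms b(1) by simp
    then have "x = (a + 2 * b') mod n"
      using b(2) by (metis mod_add_self2)
    moreover have "2 * b' < n" "n - 3 < n"
      using b Suc assms by auto
    moreover have "x \<in> arc n a"
      using arc_mem_iff[of "2 * b'" n a] calculation assms b(1) Suc by simp
    moreover have "x \<noteq> (a + (n - 3)) mod n"
      using mod_offset_unique[of "2 * b'" n "n - 3" a] calculation b Suc assms by auto
    ultimately show ?thesis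
      by simp
  qed
qed

section \<open>Rankings of the odd cycle\<close>

(* p s will be the shelling position of the arc starting at 2 s. If an earlier arc lies fewer than
   m steps behind (ahead of) s, arc s must be reached from arc s - 1 (arc s + 1), which then comes
   earlier. *)
locale odd_cycle_ranking =
  fixes n m :: nat and p :: "nat \<Rightarrow> nat"
  assumes n: "n = 2 * m + 1" and m: "3 \<le> m"
    and p_eq: "\<And>x y. p x = p y \<longleftrightarrow> x mod n = y mod n"
    and behind: "\<And>r k. 0 < k \<Longrightarrow> k < m \<Longrightarrow> p r < p (r + k) \<Longrightarrow> p (r + k - 1) < p (r + k)"
    and ahead: "\<And>s k. 0 < k \<Longrightarrow> k < m \<Longrightarrow> p (s + k) < p s \<Longrightarrow> p (s + 1) < p s"
begin

lemma p_less_or_greater: "x < y \<Longrightarrow> y < x + n \<Longrightarrow> p x < p y \<or> p y < p x"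
  using p_eq mod_neq_of_lt by (metis linorder_neqE_nat)

lemma p_min_less: "(\<And>x. p s0 \<le> p x) \<Longrightarrow> s0 < x \<Longrightarrow> x < s0 + n \<Longrightarrow> p s0 < p x"
  using p_less_or_greater leD by blast

lemma antipode_not_increasing:
  assumes s0: "\<And>x. p s0 \<le> p x"
  shows "\<not> p (s0 + m) < p (s0 + m + 1)"
proof
  assume up: "p (s0 + m) < p (s0 + m + 1)"
  define c where "c = s0 + m"
  define q where "q = c + m - 1"
  have q_eq: "c + 1 + (m - 1) = q + 1" "q + 2 = s0 + n"
    using n m by (simp_all add: c_def q_def)
  have "p c < p (c + 2)"
  proof (rule ccontr)
    assume "\<not> ?thesis"
    then have "p (c + 2) < p c"
      using p_less_or_greater[of c "c + 2"] n m by auto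
    then show False
      using ahead[of 2 c] up m by (simp add: c_def)
  qed
  then have d_e: "p (c + 1) < p (c + 2)"
    using behind[of 2 c] m by simp
  have "p (c + 1) < p (q + 1)"
  proof (rule ccontr)
    assume "\<not> ?thesis"
    then have "p (q + 1) < p (c + 1)"
      using p_less_or_greater[of "c + 1" "q + 1"] n m by (auto simp: q_def)
    then show False
      using ahead[of "m - 1" "c + 1", unfolded q_eq] d_e m by simp
  qed
  then have "p q < p (q + 1)"
    using behind[of "m - 1" "c + 1", unfolded q_eq] m by simp
  moreover have "p (q + 1) < p q"
  proof -
    have "p (q + 2) = p s0"
      using q_eq(2) p_eq by (metis mod_add_self2)
    also have "p s0 < p q"
      using p_min_less[OF s0] n m by (simp add: q_def c_def)
    finally show ?thesis
      using ahead[of 2 q] m by simp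
  qed
  ultimately show False
    by simp
qed

lemma antipode_not_decreasing:
  assumes s0: "\<And>x. p s0 \<le> p x"
  shows "\<not> p (s0 + m + 1) < p (s0 + m)"
proof
  assume down: "p (s0 + m + 1) < p (s0 + m)"
  define c where "c = s0 + m"
  define f where "f = c - 1"
  have c_eq: "f + 1 = c" "s0 + 1 + (m - 1) = c"
    using m by (simp_all add: c_def f_def)
  have "p (f + 2) < p f"
  proof (rule ccontr)
    assume "\<not> ?thesis"
    then have "p f < p (f + 2)"
      using p_less_or_greater[of f "f + 2"] n m by auto
    then show False
      using behind[of 2 f] down c_eq m by (simp add: c_def)
  qed
  then have c_f: "p c < p f"
    using ahead[of 2 f] c_eq m by simp
  have "p c < p (s0 + 1)"
  proof (rule ccontr)
    assume "\<not> ?thesis"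
    then have "p (s0 + 1) < p c"
      using p_less_or_greater[of "s0 + 1" c] n m by (auto simp: c_def)
    then show False
      using behind[of "m - 1" "s0 + 1", unfolded c_eq f_def[symmetric]] c_f m by simp
  qed
  then have "p (s0 + 2) < p (s0 + 1)"
    using ahead[of "m - 1" "s0 + 1", unfolded c_eq] m by simp
  moreover have "p (s0 + 1) < p (s0 + 2)"
    using behind[of 2 s0] p_min_less[OF s0, of "s0 + 2"] n m by simp
  ultimately show False
    by simp
qed

end

lemma no_odd_cycle_ranking: "\<not> odd_cycle_ranking n m p"
proof
  assume "odd_cycle_ranking n m p"
  then interpret odd_cycle_ranking n m p .
  obtain s0 where s0: "\<And>x. p s0 \<le> p x"
    using ex_has_least_nat[of "\<lambda>_. True" 0 p] by auto
  show False
    using p_less_or_greater[of "s0 + m" "s0 + m + 1"] n m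
      antipode_not_increasing[OF s0] antipode_not_decreasing[OF s0] by simp
qed

section \<open>The graph G_{n,t}\<close>

lemma Gnt_block_subset: "i < n \<Longrightarrow> Gnt_block n t i \<subseteq> Gnt_V n t"
  unfolding Gnt_block_def Gnt_V_def by auto

lemma card_Gnt_block:
  assumes "i < n" "2 \<le> n" "2 \<le> t"
  shows "card (Gnt_block n t i) = t"
proof -
  define xs where "xs = (\<lambda>j. (i, j)) ` {1..t - 2}"
  have "Gnt_block n t i = insert (i, 0) (insert (Suc i mod n, 0) xs)"
    unfolding Gnt_block_def xs_def by auto
  moreover have "card xs = t - 2"
    unfolding xs_def by (simp add: card_image inj_on_def)
  moreover have "(i, 0) \<notin> xs" "(Suc i mod n, 0) \<notin> xs" "finite xs"
    unfolding xs_def by auto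
  moreover have "i \<noteq> Suc i mod n"
    using assms(1,2) by (cases "Suc i = n") auto
  ultimately show ?thesis
    using assms(3) by simp
qed

lemma Gnt_block_edge:
  "i < n \<Longrightarrow> p \<in> Gnt_block n t i \<Longrightarrow> q \<in> Gnt_block n t i \<Longrightarrow> p \<noteq> q \<Longrightarrow> {p, q} \<in> Gnt_E n t"
  unfolding Gnt_E_def two_sets_def by (auto simp: card_insert_if)

lemma Gnt_edge_x:
  assumes "{(i, j), z} \<in> Gnt_E n t" "1 \<le> j"
  shows "z \<in> Gnt_block n t i"
proof -
  from assms(1) obtain i' where "{(i, j), z} \<in> two_sets (Gnt_block n t i')"
    unfolding Gnt_E_def using assms(2) by (auto simp: doubleton_eq_iff)
  then have "(i, j) \<in> Gnt_block n t i'" "z \<in> Gnt_block n t i'"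
    unfolding two_sets_def by auto
  moreover from this(1) have "i' = i"
    using assms(2) unfolding Gnt_block_def by auto
  ultimately show ?thesis
    by simp
qed

lemma Gnt_clique_with_x:
  assumes C: "C \<subseteq> Gnt_V n t" "is_clique (Gnt_E n t) C" "card C = t"
    and x: "(i, j) \<in> C" "1 \<le> j" and nt: "2 \<le> n" "2 \<le> t"
  shows "C = Gnt_block n t i"
proof -
  have i: "i < n" "j \<le> t - 2"
    using C(1) x unfolding Gnt_V_def by auto
  have "C \<subseteq> Gnt_block n t i"
  proof
    fix q assume "q \<in> C"
    show "q \<in> Gnt_block n t i"
    proof (cases "q = (i, j)")
      case True
      then show ?thesis
        using i x(2) unfolding Gnt_block_def by auto
    next
      case False
      then show ?thesis
        using C(2) \<open>q \<in> C\<close> x Gnt_edge_x unfolding is_clique_def by metis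
    qed
  qed
  moreover have "finite (Gnt_block n t i)"
    unfolding Gnt_block_def by simp
  ultimately show ?thesis
    using card_subset_eq card_Gnt_block[OF i(1) nt] C(3) by metis
qed

section \<open>Facets and shellings of CF_t(Cl(G,S,t))\<close>

definition shelling_order :: "'a set set \<Rightarrow> 'a set list \<Rightarrow> bool" where
  "shelling_order D Fs \<longleftrightarrow> distinct Fs \<and> set Fs = facets D \<and>
     (\<forall>i j. i < j \<and> j < length Fs \<longrightarrow> (\<exists>v \<in> Fs ! j - Fs ! i. \<exists>l < j. Fs ! j - Fs ! l = {v}))"

lemma shellable_iff_shelling_order: "shellable D \<longleftrightarrow> (\<exists>Fs. shelling_order D Fs)"
  unfolding shellable_def shelling_order_def ..

lemma facet_eqI: "F \<in> facets D \<Longrightarrow> G \<in> D \<Longrightarrow> F \<subseteq> G \<Longrightarrow> G = F"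
  unfolding facets_def by blast

locale Cl_Gnt =
  fixes V :: "'a set" and E :: "'a set set" and S :: "'a set" and t n :: nat
    and V' :: "'a set" and E' :: "'a set set"
    and f :: "'a \<Rightarrow> nat \<times> nat" and K :: "'a \<Rightarrow> 'a set"
  assumes simple: "simple_graph V E" and t: "3 \<le> t" and n: "3 \<le> n"
    and f_bij: "bij_betw f (V - S) (Gnt_V n t)"
    and f_edge: "\<forall>u\<in>V - S. \<forall>v\<in>V - S. {u, v} \<in> del_edges S E \<longleftrightarrow> {f u, f v} \<in> Gnt_E n t"
    and K: "\<forall>v\<in>S. v \<in> K v \<and> finite (K v) \<and> card (K v) \<ge> t \<and> K v \<inter> V = {v}"
    and K_disjoint: "\<forall>u\<in>S. \<forall>v\<in>S. u \<noteq> v \<longrightarrow> K u \<inter> K v = {}"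
    and V': "V' = V \<union> (\<Union>v\<in>S. K v)"
    and E': "E' = E \<union> (\<Union>v\<in>S. two_sets (K v))"
begin

definition g :: "nat \<times> nat \<Rightarrow> 'a" where
  "g = inv_into (V - S) f"

definition y :: "nat \<Rightarrow> 'a" where
  "y i = g (i, 0)"

definition X :: "'a set" where
  "X = {z \<in> V - S. snd (f z) \<noteq> 0}"

definition pad :: "'a \<Rightarrow> 'a set" where
  "pad v = (SOME B. B \<subseteq> K v - {v} \<and> card B = t - 1)"

(* base is the set sigma of the proof sketch above. *)
definition base :: "'a set" where
  "base = (\<Union>v\<in>S. pad v) \<union> X"

definition face_of :: "nat set \<Rightarrow> 'a set" where
  "face_of J = base \<union> y ` J"

lemma f_in: "z \<in> V - S \<Longrightarrow> f z \<in> Gnt_V n t"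
  using f_bij bij_betwE by blast

lemma g_f: "z \<in> V - S \<Longrightarrow> g (f z) = z"
  unfolding g_def using f_bij bij_betw_inv_into_left by metis

lemma g_in: "q \<in> Gnt_V n t \<Longrightarrow> g q \<in> V - S"
  unfolding g_def using f_bij by (metis bij_betw_def inv_into_into)

lemma f_g: "q \<in> Gnt_V n t \<Longrightarrow> f (g q) = q"
  unfolding g_def using f_bij bij_betw_inv_into_right by metis

lemma inj_on_g: "inj_on g (Gnt_V n t)"
  using f_g by (rule inj_on_inverseI)

lemma y_in: "i < n \<Longrightarrow> y i \<in> V - S"
  unfolding y_def by (rule g_in) (simp add: Gnt_V_def)

lemma f_y: "i < n \<Longrightarrow> f (y i) = (i, 0)"
  unfolding y_def by (rule f_g) (simp add: Gnt_V_def)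

lemma y_inj: "i < n \<Longrightarrow> j < n \<Longrightarrow> y i = y j \<Longrightarrow> i = j"
  using f_y by (metis prod.inject)

lemma pad:
  assumes "v \<in> S"
  shows "pad v \<subseteq> K v - {v}" "card (pad v) = t - 1" "finite (pad v)"
proof -
  have "t - 1 \<le> card (K v - {v})"
    using K assms by auto
  then obtain B where "B \<subseteq> K v - {v}" "card B = t - 1"
    by (rule obtain_subset_with_card_n)
  then have "pad v \<subseteq> K v - {v} \<and> card (pad v) = t - 1"
    unfolding pad_def by (rule someI[where P = "\<lambda>B. B \<subseteq> K v - {v} \<and> card B = t - 1", OF conjI])
  moreover have "finite (K v)"
    using K assms by blast
  ultimately show "pad v \<subseteq> K v - {v}" "card (pad v) = t - 1" "finite (pad v)"
    using finite_subset by auto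
qed

lemma pad_disjoint_V: "v \<in> S \<Longrightarrow> pad v \<inter> V = {}"
  using pad(1) K by blast

lemma K_disjoint_VS: "v \<in> S \<Longrightarrow> K v \<inter> (V - S) = {}"
  using K by auto

lemma y_not_base: "i < n \<Longrightarrow> y i \<notin> base"
  unfolding base_def X_def using pad_disjoint_V y_in f_y by fastforce

lemma face_of_subset: "J \<subseteq> {..<n} \<Longrightarrow> face_of J \<subseteq> V'"
  unfolding face_of_def base_def X_def V' using pad(1) y_in by blast

lemma face_of_mono: "J \<subseteq> J' \<Longrightarrow> face_of J \<subseteq> face_of J'"
  unfolding face_of_def by blast

lemma face_of_inj:
  assumes "J \<subseteq> {..<n}" "J' \<subseteq> {..<n}" "face_of J = face_of J'"
  shows "J = J'"
proof -
  have "j \<in> J'" if "face_of J = face_of J'" "J \<subseteq> {..<n}" "J' \<subseteq> {..<n}" "j \<in> J" for J J' j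
  proof -
    have "y j \<in> y ` J'"
      using that y_not_base[of j] unfolding face_of_def by blast
    then obtain j' where "j' \<in> J'" "y j = y j'"
      by blast
    then show ?thesis
      using y_inj[of j j'] that by blast
  qed
  from this[OF assms(3,1,2)] this[OF assms(3)[symmetric] assms(2,1)] show ?thesis
    by blast
qed

lemma edge_VS:
  assumes "a \<in> V - S" "b \<in> V - S" "{a, b} \<in> E'"
  shows "{f a, f b} \<in> Gnt_E n t"
proof -
  have "{a, b} \<notin> two_sets (K v)" if "v \<in> S" for v
    using K_disjoint_VS[OF that] assms(1) unfolding two_sets_def by blast
  then have "{a, b} \<in> del_edges S E"
    using assms unfolding E' del_edges_def by blast
  then show ?thesis
    using f_edge assms(1,2) by blast
qed

lemma edge_g:
  assumes "p \<in> Gnt_V n t" "q \<in> Gnt_V n t" "{p, q} \<in> Gnt_E n t"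
  shows "{g p, g q} \<in> E'"
proof -
  have "{g p, g q} \<in> del_edges S E"
    using f_edge g_in f_g assms by simp
  then show ?thesis
    unfolding del_edges_def E' by blast
qed

lemma edge_subset_V: "e \<in> E \<Longrightarrow> e \<subseteq> V"
  using simple unfolding simple_graph_def by blast

lemma edge_pad:
  assumes v: "v \<in> S" and a: "a \<in> pad v" and e: "{a, b} \<in> E'"
  shows "b \<in> K v"
proof -
  have "{a, b} \<notin> E"
    using pad_disjoint_V[OF v] a edge_subset_V by blast
  then obtain u where u: "u \<in> S" "{a, b} \<in> two_sets (K u)"
    using e unfolding E' by blast
  then have ab: "a \<in> K u" "b \<in> K u"
    unfolding two_sets_def by auto
  have "a \<in> K v"
    using pad(1)[OF v] a by blast
  then have "u = v"
    using K_disjoint u(1) v ab(1) by blast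
  with ab show ?thesis
    by simp
qed

lemma clique_K: "v \<in> S \<Longrightarrow> B \<subseteq> K v \<Longrightarrow> is_clique E' B"
  unfolding is_clique_def E' two_sets_def by (auto simp: card_insert_if)

lemma no_adjacent_y:
  assumes G: "G \<in> CF t V' E'" "X \<subseteq> G" and ij: "i < n" "j < n" "cyc_adj n i j"
    and y: "y i \<in> G" "y j \<in> G"
  shows False
proof -
  have succ: False if i: "i < n" and yi: "y i \<in> G" "y (Suc i mod n) \<in> G" for i
  proof -
    define B where "B = g ` Gnt_block n t i"
    have sub: "Gnt_block n t i \<subseteq> Gnt_V n t"
      using Gnt_block_subset[OF i] .
    have "card B = card (Gnt_block n t i)"
      unfolding B_def using card_image inj_on_subset[OF inj_on_g sub] by blast
    also have "\<dots> = t"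
      using card_Gnt_block[OF i] n t by simp
    finally have "card B = t" .
    moreover have "B \<subseteq> G"
    proof
      fix z assume "z \<in> B"
      then obtain q where q: "q \<in> Gnt_block n t i" "z = g q"
        unfolding B_def by blast
      then consider "q = (i, 0)" | "q = (Suc i mod n, 0)" | j where "q = (i, j)" "1 \<le> j"
        unfolding Gnt_block_def by auto
      then show "z \<in> G"
      proof cases
        case 3
        then have "z \<in> X"
          using q sub g_in f_g unfolding X_def by auto
        then show ?thesis
          using G(2) by blast
      qed (use q yi in \<open>simp_all add: y_def\<close>)
    qed
    moreover have "is_clique E' B"
      unfolding is_clique_def B_def
      using Gnt_block_edge[OF i] edge_g sub by blast
    ultimately show False
      using G(1) unfolding CF_def by blast
  qed
  from ij(3) show False
    unfolding cyc_adj_def using succ ij y by auto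
qed

lemma VS_cases:
  assumes "z \<in> V - S"
  obtains "z \<in> X" | i where "i < n" "z = y i"
proof (cases "snd (f z) = 0")
  case True
  then obtain i where fz: "f z = (i, 0)"
    by (metis prod.collapse)
  then have "i < n"
    using f_in[OF assms] unfolding Gnt_V_def by auto
  moreover have "z = y i"
    unfolding y_def using g_f[OF assms] fz by simp
  ultimately show ?thesis
    using that(2) by blast
next
  case False
  then show ?thesis
    using that(1) assms unfolding X_def by blast
qed

lemma CF_K_subset_pad:
  assumes G: "G \<in> CF t V' E'" "pad v \<subseteq> G" and v: "v \<in> S" and z: "z \<in> G" "z \<in> K v"
  shows "z \<in> pad v"
proof (rule ccontr)
  assume z_pad: "z \<notin> pad v"
  define B where "B = insert z (pad v)"
  have "card B = t"
    unfolding B_def using z_pad pad[OF v] t by simp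
  moreover have "B \<subseteq> G"
    unfolding B_def using z G(2) by blast
  moreover have "is_clique E' B"
    unfolding B_def using clique_K[OF v] z(2) pad(1)[OF v] by blast
  ultimately show False
    using G(1) unfolding CF_def by blast
qed

lemma CF_subset_base:
  assumes G: "G \<in> CF t V' E'" "base \<subseteq> G"
  shows "G \<subseteq> base \<union> y ` {..<n}"
proof
  fix z assume zG: "z \<in> G"
  have in_pad: "z \<in> pad v" if "v \<in> S" "z \<in> K v" for v
    using CF_K_subset_pad[OF G(1) _ that(1) zG that(2)] G(2) that(1) unfolding base_def by blast
  have "z \<in> V'"
    using G(1) zG unfolding CF_def by blast
  then consider "z \<in> V - S" | "z \<in> S" | v where "v \<in> S" "z \<in> K v"
    unfolding V' by blast
  then show "z \<in> base \<union> y ` {..<n}"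
  proof cases
    case 1
    then show ?thesis
      by (cases rule: VS_cases) (auto simp: base_def)
  next
    case 2
    then show ?thesis
      using in_pad K unfolding base_def by blast
  next
    case 3
    then show ?thesis
      using in_pad unfolding base_def by blast
  qed
qed

lemma clique_meeting_pad:
  assumes B: "is_clique E' B" "B \<subseteq> face_of J" and J: "J \<subseteq> {..<n}"
    and v: "v \<in> S" and a: "a \<in> B" "a \<in> pad v"
  shows "B \<subseteq> pad v"
proof
  fix b assume b: "b \<in> B"
  have "b \<in> K v"
  proof (cases "b = a")
    case True
    then show ?thesis
      using a pad(1)[OF v] by blast
  next
    case False
    then show ?thesis
      using B(1) a b edge_pad[OF v a(2)] unfolding is_clique_def by metis
  qed
  moreover have "b \<notin> V - S"
    using K_disjoint_VS[OF v] calculation by blast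
  moreover have "b \<in> face_of J"
    using B(2) b by blast
  ultimately obtain u where u: "u \<in> S" "b \<in> pad u" and "b \<in> K v"
    unfolding face_of_def base_def X_def using y_in J by blast
  moreover have "b \<in> K u"
    using pad(1)[OF u(1)] u(2) by blast
  ultimately have "u = v"
    using K_disjoint v by blast
  with u(2) show "b \<in> pad v"
    by simp
qed

lemma clique_image_f:
  assumes B: "B \<subseteq> V - S" "is_clique E' B"
  shows "is_clique (Gnt_E n t) (f ` B)" "card (f ` B) = card B" "f ` B \<subseteq> Gnt_V n t"
proof -
  show "is_clique (Gnt_E n t) (f ` B)"
    unfolding is_clique_def
  proof (intro ballI impI)
    fix p q assume "p \<in> f ` B" "q \<in> f ` B" "p \<noteq> q"
    then obtain a b where "a \<in> B" "b \<in> B" "a \<noteq> b" "p = f a" "q = f b"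
      by blast
    then show "{p, q} \<in> Gnt_E n t"
      using B edge_VS unfolding is_clique_def by blast
  qed
  show "card (f ` B) = card B"
    using card_image[OF inj_on_subset[OF bij_betw_imp_inj_on[OF f_bij] B(1)]] .
  show "f ` B \<subseteq> Gnt_V n t"
    using B(1) f_in by blast
qed

lemma clique_in_X_y:
  assumes J: "cyc_indep n J" "card J < t"
    and B: "B \<subseteq> X \<union> y ` J" "is_clique E' B" "card B = t"
  shows False
proof -
  have Jn: "J \<subseteq> {..<n}"
    using J(1) unfolding cyc_indep_def by blast
  have BVS: "B \<subseteq> V - S"
    using B(1) y_in Jn unfolding X_def by blast
  have y_of: "k \<in> J \<and> z = y k" if z: "z \<in> B" "f z = (k, 0)" for z k
  proof -
    have "z \<notin> X"
      using z(2) unfolding X_def by simp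
    then obtain k' where "k' \<in> J" "z = y k'"
      using z(1) B(1) by blast
    with z(2) show ?thesis
      using f_y Jn by auto
  qed
  show False
  proof (cases "\<exists>b\<in>B. snd (f b) \<noteq> 0")
    case True
    then obtain b i j where "b \<in> B" "f b = (i, j)" "j \<noteq> 0"
      by (metis prod.collapse)
    then have "f ` B = Gnt_block n t i"
      using Gnt_clique_with_x[of "f ` B" n t i j] clique_image_f[OF BVS B(2)] B(3) n t by force
    then have "(i, 0) \<in> f ` B" "(Suc i mod n, 0) \<in> f ` B"
      unfolding Gnt_block_def by auto
    then have "i \<in> J" "Suc i mod n \<in> J"
      using y_of by (metis imageE)+
    moreover have "cyc_adj n i (Suc i mod n)"
      unfolding cyc_adj_def by simp
    ultimately show False
      using J(1) unfolding cyc_indep_def by blast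
  next
    case False
    have "B \<subseteq> y ` J"
    proof
      fix b assume "b \<in> B"
      with False have "f b = (fst (f b), 0)"
        by (metis prod.collapse)
      with \<open>b \<in> B\<close> show "b \<in> y ` J"
        using y_of by blast
    qed
    moreover have "finite J"
      using Jn finite_subset by blast
    ultimately have "card B \<le> card J"
      using card_mono card_image_le le_trans by (metis finite_imageI)
    then show False
      using B(3) J(2) by simp
  qed
qed

lemma face_of_in_CF:
  assumes J: "cyc_indep n J" "card J < t"
  shows "face_of J \<in> CF t V' E'"
proof -
  have Jn: "J \<subseteq> {..<n}"
    using J(1) unfolding cyc_indep_def by blast
  have False if B: "B \<subseteq> face_of J" "is_clique E' B" "card B = t" for B
  proof (cases "\<exists>v\<in>S. B \<inter> pad v \<noteq> {}")
    case True
    then obtain v a where v: "v \<in> S" "a \<in> B" "a \<in> pad v"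
      by blast
    then have "card B \<le> card (pad v)"
      using clique_meeting_pad[OF B(2,1) Jn] pad(3) card_mono by metis
    then show False
      using B(3) pad(2)[OF v(1)] t by simp
  next
    case False
    then have "B \<subseteq> X \<union> y ` J"
      using B(1) unfolding face_of_def base_def by blast
    then show False
      using clique_in_X_y J B(2,3) by blast
  qed
  then show ?thesis
    using face_of_subset[OF Jn] unfolding CF_def by blast
qed

lemma face_of_facet:
  assumes J: "cyc_indep n J" "cyc_dom n J" "card J < t"
  shows "face_of J \<in> facets (CF t V' E')"
proof -
  have FJ: "face_of J \<in> CF t V' E'"
    using face_of_in_CF J(1,3) .
  have False if G: "G \<in> CF t V' E'" "face_of J \<subset> G" for G
  proof -
    obtain z where z: "z \<in> G" "z \<notin> face_of J"
      using G(2) by blast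
    have "base \<subseteq> G"
      using G(2) unfolding face_of_def by blast
    then obtain u where u: "u < n" "z = y u"
      using CF_subset_base[OF G(1)] z unfolding face_of_def by blast
    then have "u \<notin> J"
      using z(2) unfolding face_of_def by blast
    then obtain j where j: "j \<in> J" "cyc_adj n u j"
      using J(2) u(1) unfolding cyc_dom_def by blast
    have "j < n" "y j \<in> G" "X \<subseteq> G"
      using j(1) J(1) G(2) unfolding cyc_indep_def face_of_def base_def by auto
    then show False
      using no_adjacent_y[OF G(1) _ u(1) _ j(2)] u z(1) by blast
  qed
  with FJ show ?thesis
    unfolding facets_def by blast
qed

lemma facet_exchange:
  assumes J: "J \<subseteq> {..<n}" "face_of J \<in> CF t V' E'"
    and G: "G \<in> facets (CF t V' E')" and diff: "face_of J - G = {v}" and v: "v \<notin> base"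
  obtains w u where "w \<in> J" "v = y w" "u < n" "u \<notin> J" "face_of (insert u (J - {w})) \<subseteq> G"
    "\<And>j. j \<in> J \<Longrightarrow> cyc_adj n u j \<Longrightarrow> j = w"
proof -
  have GD: "G \<in> CF t V' E'"
    using G unfolding facets_def by blast
  obtain w where w: "w \<in> J" "v = y w"
    using diff v unfolding face_of_def by blast
  have in_G: "x \<in> G" if "x \<in> face_of J" "x \<noteq> v" for x
    using diff that by blast
  have base_G: "base \<subseteq> G"
    using in_G v unfolding face_of_def by blast
  have "\<not> G \<subseteq> face_of J"
    using G J(2) diff unfolding facets_def by blast
  then obtain u where u: "u < n" "y u \<in> G" "u \<notin> J"
    using CF_subset_base[OF GD base_G] unfolding face_of_def by blast
  have yJ: "y j \<in> G" if "j \<in> J" "j \<noteq> w" for j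
    using in_G[of "y j"] y_inj[of j w] that J(1) w unfolding face_of_def by blast
  have "face_of (insert u (J - {w})) \<subseteq> G"
    unfolding face_of_def using base_G u(2) yJ by blast
  moreover have "j = w" if "j \<in> J" "cyc_adj n u j" for j
  proof (rule ccontr)
    assume "j \<noteq> w"
    then show False
      using no_adjacent_y[OF GD _ u(1) _ that(2) u(2) yJ[OF that(1)]] base_G that(1) J(1)
      unfolding base_def by blast
  qed
  ultimately show ?thesis
    using that w u by blast
qed

lemma shelling_exchange:
  assumes Fs: "shelling_order (CF t V' E') Fs" and ij: "i < j" "j < length Fs"
    and F: "Fs ! i = face_of J'" "Fs ! j = face_of J" and J: "J \<subseteq> {..<n}"
  obtains w u l where "w \<in> J" "w \<notin> J'" "u < n" "u \<notin> J" "l < j"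
    "face_of (insert u (J - {w})) \<subseteq> Fs ! l" "\<And>j'. j' \<in> J \<Longrightarrow> cyc_adj n u j' \<Longrightarrow> j' = w"
proof -
  obtain v l where v: "v \<in> Fs ! j" "v \<notin> Fs ! i" and l: "l < j" "Fs ! j - Fs ! l = {v}"
    using Fs ij unfolding shelling_order_def by blast
  have "Fs ! l \<in> facets (CF t V' E')" "Fs ! j \<in> facets (CF t V' E')"
    using Fs ij l(1) unfolding shelling_order_def by (metis nth_mem order.strict_trans)+
  moreover have "v \<notin> base"
    using v(2) F(1) unfolding face_of_def by blast
  ultimately obtain w u where "w \<in> J" "v = y w" "u < n" "u \<notin> J"
    "face_of (insert u (J - {w})) \<subseteq> Fs ! l" "\<And>j'. j' \<in> J \<Longrightarrow> cyc_adj n u j' \<Longrightarrow> j' = w"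
    using facet_exchange[OF J, of "Fs ! l" v] l(2) F(2) unfolding facets_def by auto
  moreover have "w \<notin> J'"
    using v(2) F(1) calculation(2) unfolding face_of_def by blast
  ultimately show ?thesis
    using that l(1) by blast
qed

lemma arc_facet:
  assumes "n div 2 < t"
  shows "face_of (arc n a) \<in> facets (CF t V' E')"
proof (rule face_of_facet)
  show "cyc_indep n (arc n a)" "cyc_dom n (arc n a)"
    using cyc_indep_arc cyc_dom_arc n by simp_all
  show "card (arc n a) < t"
    using card_arc assms by (rule le_less_trans)
qed

lemma arc_shelling_step:
  assumes nt: "n div 2 < t" and Fs: "shelling_order (CF t V' E') Fs" and ij: "i < j" "j < length Fs"
    and F: "Fs ! i = face_of (arc n a')" "Fs ! j = face_of (arc n a)"
  shows "odd n \<and> (a mod n \<notin> arc n a' \<and> (\<exists>l<j. Fs ! l = face_of (arc n (a + 2))) \<or>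
                   (a + (n - 3)) mod n \<notin> arc n a' \<and> (\<exists>l<j. Fs ! l = face_of (arc n (a + n - 2))))"
proof -
  have "arc n a \<subseteq> {..<n}"
    using arc_subset n by simp
  then obtain w u l where w: "w \<in> arc n a" "w \<notin> arc n a'" and u: "u < n" "u \<notin> arc n a"
    and l: "l < j" "face_of (insert u (arc n a - {w})) \<subseteq> Fs ! l"
    and only_w: "\<And>j'. j' \<in> arc n a \<Longrightarrow> cyc_adj n u j' \<Longrightarrow> j' = w"
    using shelling_exchange[OF Fs ij F] by blast
  have "Fs ! l \<in> CF t V' E'"
    using Fs l(1) ij(2) unfolding shelling_order_def facets_def
    by (metis (no_types, lifting) mem_Collect_eq nth_mem order.strict_trans)
  then have Fl: "Fs ! l = face_of (arc n b)" if "arc n b \<subseteq> insert u (arc n a - {w})" for b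
    using facet_eqI[OF arc_facet[OF nt]] face_of_mono[OF that] l(2) by blast
  have "odd n" and wu: "w = a mod n \<and> u = (a + (n - 1)) mod n \<or>
                        w = (a + (n - 3)) mod n \<and> u = (a + (n - 2)) mod n"
    using arc_exchange[OF n u only_w] by auto
  then obtain m where m: "n = 2 * m + 1"
    by (metis oddE)
  from wu show ?thesis
  proof
    assume wu: "w = a mod n \<and> u = (a + (n - 1)) mod n"
    then have "Fs ! l = face_of (arc n (a + 2))"
      using Fl arc_shift_succ[OF m, of a] by presburger
    with wu show ?thesis
      using \<open>odd n\<close> w(2) l(1) by blast
  next
    assume wu: "w = (a + (n - 3)) mod n \<and> u = (a + (n - 2)) mod n"
    then have "Fs ! l = face_of (arc n (a + n - 2))"
      using Fl arc_shift_pred[OF m, of a] by presburger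
    with wu show ?thesis
      using \<open>odd n\<close> w(2) l(1) by blast
  qed
qed

lemma not_shellable_even:
  assumes "even n" "n div 2 < t"
  shows "\<not> shellable (CF t V' E')"
proof
  assume "shellable (CF t V' E')"
  then obtain Fs where Fs: "shelling_order (CF t V' E') Fs"
    unfolding shellable_iff_shelling_order by blast
  have "face_of (arc n b) \<in> set Fs" for b
    using arc_facet[OF assms(2)] Fs unfolding shelling_order_def by blast
  then obtain i0 i1 where i: "i0 < length Fs" "Fs ! i0 = face_of (arc n 0)"
    "i1 < length Fs" "Fs ! i1 = face_of (arc n 1)"
    by (metis in_set_conv_nth)
  have "arc n 0 \<noteq> arc n 1"
    using arc_even_distinct assms(1) n by simp
  then have "i0 \<noteq> i1"
    using i face_of_inj arc_subset n by (metis zero_less_numeral less_le_trans)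
  then consider "i0 < i1" | "i1 < i0"
    by linarith
  then show False
    by cases (use arc_shelling_step[OF assms(2) Fs] i assms(1) in blast)+
qed

definition arc_pos :: "'a set list \<Rightarrow> nat \<Rightarrow> nat" where
  "arc_pos Fs s = (THE i. i < length Fs \<and> Fs ! i = face_of (arc n (2 * s)))"

lemma arc_pos:
  assumes "n div 2 < t" "shelling_order (CF t V' E') Fs"
  shows "arc_pos Fs s < length Fs \<and> Fs ! arc_pos Fs s = face_of (arc n (2 * s))"
    and "l < length Fs \<Longrightarrow> Fs ! l = face_of (arc n (2 * s)) \<Longrightarrow> l = arc_pos Fs s"
proof -
  have "distinct Fs" "set Fs = facets (CF t V' E')"
    using assms(2) unfolding shelling_order_def by blast+
  then have ex1: "\<exists>!i. i < length Fs \<and> Fs ! i = face_of (arc n (2 * s))"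
    using arc_facet[OF assms(1)] by (simp add: distinct_Ex1)
  then show "arc_pos Fs s < length Fs \<and> Fs ! arc_pos Fs s = face_of (arc n (2 * s))"
    unfolding arc_pos_def by (rule theI')
  show "l = arc_pos Fs s" if "l < length Fs" "Fs ! l = face_of (arc n (2 * s))"
    unfolding arc_pos_def using ex1 that by (simp add: the1_equality)
qed

lemma arc_pos_eq_iff:
  assumes "odd n" "n div 2 < t" "shelling_order (CF t V' E') Fs"
  shows "arc_pos Fs x = arc_pos Fs x' \<longleftrightarrow> x mod n = x' mod n"
proof
  assume "arc_pos Fs x = arc_pos Fs x'"
  then have "arc n (2 * x) = arc n (2 * x')"
    using arc_pos(1)[OF assms(2,3)] face_of_inj arc_subset n by (metis zero_less_numeral less_le_trans)
  then have "(2 * x) mod n = (2 * x') mod n"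
    using arc_inj assms(1) by blast
  then show "x mod n = x' mod n"
    using mod_double_cancel assms(1) by blast
next
  assume "x mod n = x' mod n"
  then have "arc n (2 * x) = arc n (2 * x')"
    by (metis arc_cong mod_mult_right_eq)
  then show "arc_pos Fs x = arc_pos Fs x'"
    unfolding arc_pos_def by simp
qed

lemma arc_pos_step:
  assumes n_eq: "n = 2 * m + 1" and nt: "n div 2 < t" and Fs: "shelling_order (CF t V' E') Fs"
    and earlier: "arc_pos Fs r < arc_pos Fs s"
  shows "(2 * s) mod n \<notin> arc n (2 * r) \<and> arc_pos Fs (s + 1) < arc_pos Fs s \<or>
         (2 * s + (n - 3)) mod n \<notin> arc n (2 * r) \<and> arc_pos Fs (s + 2 * m) < arc_pos Fs s"
proof -
  note pos = arc_pos(1)[OF nt Fs] and pos_unique = arc_pos(2)[OF nt Fs]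
  have "2 * (s + 2 * m) = (2 * s + n - 2) + n"
    using n_eq n by simp
  then have "arc n (2 * s + 2) = arc n (2 * (s + 1))" "arc n (2 * s + n - 2) = arc n (2 * (s + 2 * m))"
    by (simp, metis arc_cong mod_add_self2)
  then show ?thesis
    using arc_shelling_step[OF nt Fs earlier pos[of s, THEN conjunct1]
        pos[of r, THEN conjunct2] pos[of s, THEN conjunct2]] pos_unique pos
    by (metis order.strict_trans)
qed

lemma odd_cycle_ranking_arc_pos:
  assumes n_eq: "n = 2 * m + 1" and m: "3 \<le> m" and mt: "m < t"
    and Fs: "shelling_order (CF t V' E') Fs"
  shows "odd_cycle_ranking n m (arc_pos Fs)"
proof
  have nt: "n div 2 < t"
    using n_eq mt by simp
  note step = arc_pos_step[OF n_eq nt Fs]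
  show "n = 2 * m + 1" "3 \<le> m"
    using n_eq m .
  show pos_eq: "arc_pos Fs x = arc_pos Fs x' \<longleftrightarrow> x mod n = x' mod n" for x x'
    using arc_pos_eq_iff[OF _ nt Fs] n_eq by simp
  show "arc_pos Fs (r + k - 1) < arc_pos Fs (r + k)"
    if k: "0 < k" "k < m" and earlier: "arc_pos Fs r < arc_pos Fs (r + k)" for r k
  proof -
    have "r + k + 2 * m = (r + k - 1) + n"
      using k n_eq by simp
    then have "arc_pos Fs (r + k + 2 * m) = arc_pos Fs (r + k - 1)"
      by (metis pos_eq mod_add_self2)
    moreover have "(2 * (r + k)) mod n \<in> arc n (2 * r)"
      using arc_memI[of k n "2 * r"] k n_eq by (simp add: algebra_simps)
    ultimately show ?thesis
      using step[OF earlier] by auto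
  qed
  show "arc_pos Fs (s + 1) < arc_pos Fs s"
    if k: "0 < k" "k < m" and earlier: "arc_pos Fs (s + k) < arc_pos Fs s" for s k
  proof -
    have "(2 * s + (n - 3)) mod n \<in> arc n (2 * (s + k))"
      using arc_memI[of "m - 1 - k" n "2 * (s + k)"] k n_eq by (simp add: algebra_simps)
    then show ?thesis
      using step[OF earlier] by auto
  qed
qed

lemma not_shellable_odd:
  assumes "n = 2 * m + 1" "3 \<le> m" "m < t"
  shows "\<not> shellable (CF t V' E')"
  unfolding shellable_iff_shelling_order
  using no_odd_cycle_ranking odd_cycle_ranking_arc_pos[OF assms] by blast

lemma not_shellable:
  assumes "n \<noteq> 3" "n \<noteq> 5" "n div 2 < t"
  shows "\<not> shellable (CF t V' E')"
proof (cases "even n")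
  case True
  then show ?thesis
    using not_shellable_even assms(3) by blast
next
  case False
  then obtain m where m: "n = 2 * m + 1"
    by (metis oddE)
  moreover have "3 \<le> m"
    using m n assms(1,2) by simp
  ultimately show ?thesis
    using not_shellable_odd assms(3) by simp
qed

end

theorem corollary4p5:
  fixes V :: "'a set" and E :: "'a set set" and S :: "'a set" and t n :: nat
    and V' :: "'a set" and E' :: "'a set set"
  assumes "simple_graph V E" and "S \<subseteq> V" and "t \<ge> 3"
    and "graph_iso (V - S) (del_edges S E) (Gnt_V n t) (Gnt_E n t)"
    and "n \<ge> 3" and "n \<noteq> 3" and "n \<noteq> 5" and "t > (n + 1) div 2"
    and "is_Cl V E S t V' E'"
  shows "\<not> shellable (CF t V' E')"
proof -
  obtain f where "bij_betw f (V - S) (Gnt_V n t)"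
    "\<forall>u\<in>V - S. \<forall>v\<in>V - S. {u, v} \<in> del_edges S E \<longleftrightarrow> {f u, f v} \<in> Gnt_E n t"
    using assms(4) unfolding graph_iso_def by blast
  moreover obtain K where "\<forall>v\<in>S. v \<in> K v \<and> finite (K v) \<and> card (K v) \<ge> t \<and> K v \<inter> V = {v}"
    "\<forall>u\<in>S. \<forall>v\<in>S. u \<noteq> v \<longrightarrow> K u \<inter> K v = {}"
    "V' = V \<union> (\<Union>v\<in>S. K v)" "E' = E \<union> (\<Union>v\<in>S. two_sets (K v))"
    using assms(9) unfolding is_Cl_def by blast
  ultimately interpret Cl_Gnt V E S t n V' E' f K
    using assms(1,3,5) by unfold_locales
  show ?thesis
    using not_shellable assms(6-8) by simp
qed

end
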